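(* Let $\mathcal{C}$ and $\mathcal{E}$ be categories with finite limits and small coproducts in which actions of groups by automorphisms are effective, and let $F\colon\mathcal{C}\to\mathcal{E}$ be a functor preserving finite limits. If $F$ preserves strict epimorphisms and coproducts, then $F$ preserves quotients by actions of groups: for every group $H$ acting on an object $X$ of $\mathcal{C}$ with quotient $q\colon X\to X/H$, the arrow $F(q)$ is the quotient of $F(X)$ by the induced action of $H$.
   Context: An arrow $f\colon X\to Y$ is a strict epimorphism if for every $g\colon X\to Z$ compatible with $f$ (for all objects $C$ and $u,v\colon C\to X$, $f\circ u=f\circ v$ implies $g\circ u=g\circ v$) there is a unique $k$ with $g=k\circ f$. For a group $H$ acting on $X$ by automorphisms (homomorphism $H\to\mathrm{Aut}(X)^{op}$) the quotient $q\colon X\to X/H$ is universal among arrows with $q\circ h=q$ for all $h\in H$. Let $X\bullet H=\coprod_{h\in H}X$ with injections $\lambda_h$, $\nabla\colon X\bullet H\to X$ the codiagonal and $\nabla_H\colon X\bullet H\to X$ the arrow with $\nabla_H\circ\lambda_h=h$. The action is effective if the quotient $q$ exists and the induced arrow $(\nabla,\nabla_H)\colon X\bullet H\to R_q$ into the kernel pair $R_q\subseteq X\times X$ of $q$ is a strict epimorphism. *)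

theory Defs
  imports "HOL-Algebra.Group"
begin

record ('o, 'm) category =
  Obj :: "'o set"
  Arr :: "'m set"
  Dom :: "'m \<Rightarrow> 'o"
  Cod :: "'m \<Rightarrow> 'o"
  Cmp :: "'m \<Rightarrow> 'm \<Rightarrow> 'm"   (* Cmp C g f = g \<circ> f *)
  Idt :: "'o \<Rightarrow> 'm"

definition hom :: "('o, 'm) category \<Rightarrow> 'o \<Rightarrow> 'o \<Rightarrow> 'm set" where
  "hom C X Y = {f \<in> Arr C. Dom C f = X \<and> Cod C f = Y}"

definition is_category :: "('o, 'm) category \<Rightarrow> bool" where
  "is_category C \<longleftrightarrow>
     (\<forall>f \<in> Arr C. Dom C f \<in> Obj C \<and> Cod C f \<in> Obj C) \<and>
     (\<forall>X \<in> Obj C. Idt C X \<in> hom C X X) \<and>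
     (\<forall>X \<in> Obj C. \<forall>Y \<in> Obj C. \<forall>Z \<in> Obj C. \<forall>f \<in> hom C X Y. \<forall>g \<in> hom C Y Z.
        Cmp C g f \<in> hom C X Z) \<and>
     (\<forall>f \<in> Arr C. Cmp C (Idt C (Cod C f)) f = f \<and> Cmp C f (Idt C (Dom C f)) = f) \<and>
     (\<forall>f \<in> Arr C. \<forall>g \<in> Arr C. \<forall>h \<in> Arr C. Cod C f = Dom C g \<longrightarrow> Cod C g = Dom C h \<longrightarrow>
        Cmp C h (Cmp C g f) = Cmp C (Cmp C h g) f)"

definition is_terminal :: "('o, 'm) category \<Rightarrow> 'o \<Rightarrow> bool" where
  "is_terminal C T \<longleftrightarrow> T \<in> Obj C \<and> (\<forall>X \<in> Obj C. \<exists>!t. t \<in> hom C X T)"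

definition is_pullback ::
  "('o, 'm) category \<Rightarrow> 'm \<Rightarrow> 'm \<Rightarrow> 'o \<Rightarrow> 'm \<Rightarrow> 'm \<Rightarrow> bool" where
  "is_pullback C f g P p1 p2 \<longleftrightarrow>
     f \<in> Arr C \<and> g \<in> Arr C \<and> Cod C f = Cod C g \<and> P \<in> Obj C \<and>
     p1 \<in> hom C P (Dom C f) \<and> p2 \<in> hom C P (Dom C g) \<and>
     Cmp C f p1 = Cmp C g p2 \<and>
     (\<forall>Z \<in> Obj C. \<forall>u \<in> hom C Z (Dom C f). \<forall>v \<in> hom C Z (Dom C g).
        Cmp C f u = Cmp C g v \<longrightarrow>
        (\<exists>!k. k \<in> hom C Z P \<and> Cmp C p1 k = u \<and> Cmp C p2 k = v))"

definition has_finite_limits :: "('o, 'm) category \<Rightarrow> bool" where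
  "has_finite_limits C \<longleftrightarrow>
     (\<exists>T. is_terminal C T) \<and>
     (\<forall>f \<in> Arr C. \<forall>g \<in> Arr C. Cod C f = Cod C g \<longrightarrow> (\<exists>P p1 p2. is_pullback C f g P p1 p2))"

definition is_coproduct ::
  "('o, 'm) category \<Rightarrow> 'i set \<Rightarrow> ('i \<Rightarrow> 'o) \<Rightarrow> 'o \<Rightarrow> ('i \<Rightarrow> 'm) \<Rightarrow> bool" where
  "is_coproduct C I A P inc \<longleftrightarrow>
     P \<in> Obj C \<and> (\<forall>i \<in> I. A i \<in> Obj C \<and> inc i \<in> hom C (A i) P) \<and>
     (\<forall>Z \<in> Obj C. \<forall>f. (\<forall>i \<in> I. f i \<in> hom C (A i) Z) \<longrightarrow>
        (\<exists>!k. k \<in> hom C P Z \<and> (\<forall>i \<in> I. Cmp C k (inc i) = f i)))"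

text \<open>Small coproducts: coproducts of all families indexed by subsets of the
  (arbitrary) index type 'i.\<close>
definition has_coproducts :: "'i itself \<Rightarrow> ('o, 'm) category \<Rightarrow> bool" where
  "has_coproducts _ C \<longleftrightarrow>
     (\<forall>(I :: 'i set) A. (\<forall>i \<in> I. A i \<in> Obj C) \<longrightarrow> (\<exists>P inc. is_coproduct C I A P inc))"

definition is_strict_epi :: "('o, 'm) category \<Rightarrow> 'm \<Rightarrow> bool" where
  "is_strict_epi C f \<longleftrightarrow> f \<in> Arr C \<and>
     (\<forall>g \<in> Arr C. Dom C g = Dom C f \<longrightarrow>
        (\<forall>U \<in> Obj C. \<forall>u \<in> hom C U (Dom C f). \<forall>v \<in> hom C U (Dom C f).
            Cmp C f u = Cmp C f v \<longrightarrow> Cmp C g u = Cmp C g v) \<longrightarrow>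
        (\<exists>!k. k \<in> hom C (Cod C f) (Cod C g) \<and> Cmp C k f = g))"

text \<open>A homomorphism H -> Aut(X)^op: alpha(g h) = alpha h o alpha g.\<close>
definition is_action :: "('o, 'm) category \<Rightarrow> ('g, 'b) monoid_scheme \<Rightarrow> 'o \<Rightarrow> ('g \<Rightarrow> 'm) \<Rightarrow> bool" where
  "is_action C H X \<alpha> \<longleftrightarrow>
     X \<in> Obj C \<and> (\<forall>h \<in> carrier H. \<alpha> h \<in> hom C X X) \<and>
     \<alpha> \<one>\<^bsub>H\<^esub> = Idt C X \<and>
     (\<forall>g \<in> carrier H. \<forall>h \<in> carrier H. \<alpha> (g \<otimes>\<^bsub>H\<^esub> h) = Cmp C (\<alpha> h) (\<alpha> g))"

definition is_quotient ::
  "('o, 'm) category \<Rightarrow> ('g, 'b) monoid_scheme \<Rightarrow> 'o \<Rightarrow> ('g \<Rightarrow> 'm) \<Rightarrow> 'm \<Rightarrow> 'o \<Rightarrow> bool" where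
  "is_quotient C H X \<alpha> q Q \<longleftrightarrow>
     Q \<in> Obj C \<and> q \<in> hom C X Q \<and> (\<forall>h \<in> carrier H. Cmp C q (\<alpha> h) = q) \<and>
     (\<forall>Z \<in> Obj C. \<forall>g \<in> hom C X Z. (\<forall>h \<in> carrier H. Cmp C g (\<alpha> h) = g) \<longrightarrow>
        (\<exists>!k. k \<in> hom C Q Z \<and> Cmp C k q = g))"

text \<open>Effective action: the quotient exists, and for X \<bullet> H = coproduct of copies of X
  indexed by H, the arrow (nabla, nabla_H) : X \<bullet> H -> R_q into the kernel pair of q
  is a strict epimorphism (for any choice of these universal objects).\<close>
definition is_effective ::
  "('o, 'm) category \<Rightarrow> ('g, 'b) monoid_scheme \<Rightarrow> 'o \<Rightarrow> ('g \<Rightarrow> 'm) \<Rightarrow> bool" where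
  "is_effective C H X \<alpha> \<longleftrightarrow>
     (\<exists>q Q. is_quotient C H X \<alpha> q Q) \<and>
     (\<forall>q Q XH lam nab nabH R p1 p2 e.
        is_quotient C H X \<alpha> q Q \<longrightarrow>
        is_coproduct C (carrier H) (\<lambda>_. X) XH lam \<longrightarrow>
        nab \<in> hom C XH X \<longrightarrow> (\<forall>h \<in> carrier H. Cmp C nab (lam h) = Idt C X) \<longrightarrow>
        nabH \<in> hom C XH X \<longrightarrow> (\<forall>h \<in> carrier H. Cmp C nabH (lam h) = \<alpha> h) \<longrightarrow>
        is_pullback C q q R p1 p2 \<longrightarrow>
        e \<in> hom C XH R \<longrightarrow> Cmp C p1 e = nab \<longrightarrow> Cmp C p2 e = nabH \<longrightarrow>
        is_strict_epi C e)"

definition actions_effective :: "('g, 'b) monoid_scheme itself \<Rightarrow> ('o, 'm) category \<Rightarrow> bool" where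
  "actions_effective _ C \<longleftrightarrow>
     (\<forall>(H :: ('g, 'b) monoid_scheme) X \<alpha>. group H \<longrightarrow> is_action C H X \<alpha> \<longrightarrow> is_effective C H X \<alpha>)"

definition is_functor ::
  "('o, 'm) category \<Rightarrow> ('p, 'n) category \<Rightarrow> ('o \<Rightarrow> 'p) \<Rightarrow> ('m \<Rightarrow> 'n) \<Rightarrow> bool" where
  "is_functor C E Fo Fm \<longleftrightarrow>
     (\<forall>X \<in> Obj C. Fo X \<in> Obj E) \<and>
     (\<forall>f \<in> Arr C. Fm f \<in> hom E (Fo (Dom C f)) (Fo (Cod C f))) \<and>
     (\<forall>X \<in> Obj C. Fm (Idt C X) = Idt E (Fo X)) \<and>
     (\<forall>f \<in> Arr C. \<forall>g \<in> Arr C. Cod C f = Dom C g \<longrightarrow> Fm (Cmp C g f) = Cmp E (Fm g) (Fm f))"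

definition preserves_finite_limits ::
  "('o, 'm) category \<Rightarrow> ('p, 'n) category \<Rightarrow> ('o \<Rightarrow> 'p) \<Rightarrow> ('m \<Rightarrow> 'n) \<Rightarrow> bool" where
  "preserves_finite_limits C E Fo Fm \<longleftrightarrow>
     (\<forall>T. is_terminal C T \<longrightarrow> is_terminal E (Fo T)) \<and>
     (\<forall>f g P p1 p2. is_pullback C f g P p1 p2 \<longrightarrow> is_pullback E (Fm f) (Fm g) (Fo P) (Fm p1) (Fm p2))"

definition preserves_strict_epis ::
  "('o, 'm) category \<Rightarrow> ('p, 'n) category \<Rightarrow> ('o \<Rightarrow> 'p) \<Rightarrow> ('m \<Rightarrow> 'n) \<Rightarrow> bool" where
  "preserves_strict_epis C E Fo Fm \<longleftrightarrow> (\<forall>f. is_strict_epi C f \<longrightarrow> is_strict_epi E (Fm f))"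

definition preserves_coproducts ::
  "'i itself \<Rightarrow> ('o, 'm) category \<Rightarrow> ('p, 'n) category \<Rightarrow> ('o \<Rightarrow> 'p) \<Rightarrow> ('m \<Rightarrow> 'n) \<Rightarrow> bool" where
  "preserves_coproducts _ C E Fo Fm \<longleftrightarrow>
     (\<forall>(I :: 'i set) A P inc. is_coproduct C I A P inc \<longrightarrow>
        is_coproduct E I (Fo \<circ> A) (Fo P) (Fm \<circ> inc))"

end

theory Submission
  imports Defs
begin

text \<open>Since q is a strict epimorphism and F preserves strict epimorphisms and pullbacks, an
  arrow g out of F X factors uniquely through F q once it coequalizes the projections of the
  kernel pair F R_q. Effectiveness of the action in C makes e = (\<nabla>, \<nabla>_H) : X \<bullet> H \<rightarrow> R_q a
  strict epimorphism, hence so is F e, and it suffices that g \<circ> F \<nabla> = g \<circ> F \<nabla>_H. Because F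
  preserves coproducts this can be checked on each summand F X of F (X \<bullet> H), where it is the
  invariance of g.\<close>

lemma ex1_unique: "\<exists>!x. P x \<Longrightarrow> P a \<Longrightarrow> P b \<Longrightarrow> a = b"
  by blast

lemma hom_iff: "f \<in> hom C X Y \<longleftrightarrow> f \<in> Arr C \<and> Dom C f = X \<and> Cod C f = Y"
  by (simp add: hom_def)

lemma cat_hom_objs:
  assumes "is_category C" and "f \<in> hom C X Y"
  shows "X \<in> Obj C" and "Y \<in> Obj C"
  using assms unfolding is_category_def hom_def by auto

lemma cat_id_hom: "is_category C \<Longrightarrow> X \<in> Obj C \<Longrightarrow> Idt C X \<in> hom C X X"
  unfolding is_category_def by blast

lemma cat_comp_hom:
  assumes C: "is_category C" and f: "f \<in> hom C X Y" and g: "g \<in> hom C Y Z"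
  shows "Cmp C g f \<in> hom C X Z"
proof -
  have "X \<in> Obj C" "Y \<in> Obj C" "Z \<in> Obj C"
    using cat_hom_objs[OF C f] cat_hom_objs[OF C g] by auto
  with C f g show ?thesis
    unfolding is_category_def by blast
qed

lemma cat_assoc:
  assumes "is_category C" and "f \<in> hom C X Y" and "g \<in> hom C Y Z" and "h \<in> hom C Z W"
  shows "Cmp C h (Cmp C g f) = Cmp C (Cmp C h g) f"
  using assms unfolding is_category_def hom_def by auto

lemma cat_comp_id_right: "is_category C \<Longrightarrow> f \<in> hom C X Y \<Longrightarrow> Cmp C f (Idt C X) = f"
  unfolding is_category_def hom_def by auto

lemma functor_hom: "is_functor C E Fo Fm \<Longrightarrow> f \<in> hom C X Y \<Longrightarrow> Fm f \<in> hom E (Fo X) (Fo Y)"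
  unfolding is_functor_def hom_def by auto

lemma functor_comp:
  "is_functor C E Fo Fm \<Longrightarrow> f \<in> hom C X Y \<Longrightarrow> g \<in> hom C Y Z
   \<Longrightarrow> Fm (Cmp C g f) = Cmp E (Fm g) (Fm f)"
  unfolding is_functor_def hom_def by auto

lemma functor_id: "is_functor C E Fo Fm \<Longrightarrow> X \<in> Obj C \<Longrightarrow> Fm (Idt C X) = Idt E (Fo X)"
  unfolding is_functor_def by blast

lemma pullback_homs:
  assumes "is_pullback C f f R p1 p2" and "f \<in> hom C X Y"
  shows "R \<in> Obj C" and "p1 \<in> hom C R X" and "p2 \<in> hom C R X"
    and "Cmp C f p1 = Cmp C f p2"
  using assms unfolding is_pullback_def hom_def by auto

lemma pullback_pairing:
  assumes "is_pullback C f g P p1 p2" and "Z \<in> Obj C"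
    and "u \<in> hom C Z (Dom C f)" and "v \<in> hom C Z (Dom C g)" and "Cmp C f u = Cmp C g v"
  obtains k where "k \<in> hom C Z P" and "Cmp C p1 k = u" and "Cmp C p2 k = v"
  using assms unfolding is_pullback_def by metis

lemma coproductD:
  assumes "is_coproduct C I A P inc"
  shows "P \<in> Obj C" and "\<And>i. i \<in> I \<Longrightarrow> inc i \<in> hom C (A i) P"
  using assms by (simp_all add: is_coproduct_def)

lemma coproduct_universal:
  assumes "is_coproduct C I A P inc" and "Z \<in> Obj C" and "\<forall>i \<in> I. f i \<in> hom C (A i) Z"
  shows "\<exists>!k. k \<in> hom C P Z \<and> (\<forall>i \<in> I. Cmp C k (inc i) = f i)"
  using assms(1)[unfolded is_coproduct_def, THEN conjunct2, THEN conjunct2,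
      rule_format (no_asm), OF assms(2,3)] .

lemma coproduct_copairing:
  assumes "is_coproduct C I A P inc" and "Z \<in> Obj C" and "\<forall>i \<in> I. f i \<in> hom C (A i) Z"
  shows "\<exists>k. k \<in> hom C P Z \<and> (\<forall>i \<in> I. Cmp C k (inc i) = f i)"
  by (rule ex1_implies_ex[OF coproduct_universal[OF assms]])

lemma coproduct_arrow_eqI:
  assumes C: "is_category C" and cop: "is_coproduct C I A P inc"
    and k: "k \<in> hom C P Z" and k': "k' \<in> hom C P Z"
    and eq: "\<And>i. i \<in> I \<Longrightarrow> Cmp C k (inc i) = Cmp C k' (inc i)"
  shows "k = k'"
proof -
  have "\<forall>i \<in> I. Cmp C k' (inc i) \<in> hom C (A i) Z"
    using cat_comp_hom[OF C coproductD(2)[OF cop] k'] by blast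
  then have "\<exists>!k. k \<in> hom C P Z \<and> (\<forall>i \<in> I. Cmp C k (inc i) = Cmp C k' (inc i))"
    by (rule coproduct_universal[OF cop cat_hom_objs(2)[OF C k]])
  then show ?thesis
    by (rule ex1_unique) (use k k' eq in simp_all)
qed

lemma strict_epi_factor:
  assumes "is_strict_epi C f" and "f \<in> hom C X Y" and "g \<in> hom C X Z"
    and "\<And>U u v. U \<in> Obj C \<Longrightarrow> u \<in> hom C U X \<Longrightarrow> v \<in> hom C U X
           \<Longrightarrow> Cmp C f u = Cmp C f v \<Longrightarrow> Cmp C g u = Cmp C g v"
  shows "\<exists>!k. k \<in> hom C Y Z \<and> Cmp C k f = g"
proof -
  have g: "g \<in> Arr C" "Dom C g = Dom C f" and dom_f: "Dom C f = X"
    and cod: "Cod C f = Y" "Cod C g = Z"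
    using assms(2,3) by (auto simp: hom_iff)
  have "\<forall>U \<in> Obj C. \<forall>u \<in> hom C U (Dom C f). \<forall>v \<in> hom C U (Dom C f).
      Cmp C f u = Cmp C f v \<longrightarrow> Cmp C g u = Cmp C g v"
    unfolding dom_f using assms(4) by blast
  then have "\<exists>!k. k \<in> hom C (Cod C f) (Cod C g) \<and> Cmp C k f = g"
    using assms(1) g unfolding is_strict_epi_def by blast
  then show ?thesis
    unfolding cod .
qed

lemma strict_epi_cancel:
  assumes C: "is_category C" and f_epi: "is_strict_epi C f" and f: "f \<in> hom C X Y"
    and a: "a \<in> hom C Y Z" and b: "b \<in> hom C Y Z" and eq: "Cmp C a f = Cmp C b f"
  shows "a = b"
proof -
  have "\<exists>!k. k \<in> hom C Y Z \<and> Cmp C k f = Cmp C a f"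
  proof (rule strict_epi_factor[OF f_epi f cat_comp_hom[OF C f a]])
    fix U u v assume u: "u \<in> hom C U X" and v: "v \<in> hom C U X" and uv: "Cmp C f u = Cmp C f v"
    have "Cmp C (Cmp C a f) u = Cmp C a (Cmp C f v)"
      unfolding uv[symmetric] by (rule cat_assoc[OF C u f a, symmetric])
    also have "\<dots> = Cmp C (Cmp C a f) v"
      by (rule cat_assoc[OF C v f a])
    finally show "Cmp C (Cmp C a f) u = Cmp C (Cmp C a f) v" .
  qed
  then show ?thesis
    by (rule ex1_unique) (use a b eq in simp_all)
qed

lemma strict_epi_factor_kernel_pair:
  assumes C: "is_category C" and f_epi: "is_strict_epi C f" and f: "f \<in> hom C X Y"
    and pb: "is_pullback C f f R p1 p2" and g: "g \<in> hom C X Z"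
    and coeq: "Cmp C g p1 = Cmp C g p2"
  shows "\<exists>!k. k \<in> hom C Y Z \<and> Cmp C k f = g"
proof (rule strict_epi_factor[OF f_epi f g])
  note p = pullback_homs[OF pb f]
  fix U u v assume U: "U \<in> Obj C" and u: "u \<in> hom C U X" and v: "v \<in> hom C U X"
    and uv: "Cmp C f u = Cmp C f v"
  have "Dom C f = X" using f by (simp add: hom_iff)
  with u v have "u \<in> hom C U (Dom C f)" and "v \<in> hom C U (Dom C f)" by simp_all
  then obtain k where k: "k \<in> hom C U R" and k1: "Cmp C p1 k = u" and k2: "Cmp C p2 k = v"
    by (rule pullback_pairing[OF pb U _ _ uv])
  have "Cmp C g u = Cmp C (Cmp C g p1) k"
    unfolding k1[symmetric] by (rule cat_assoc[OF C k p(2) g])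
  also have "\<dots> = Cmp C g v"
    unfolding coeq k2[symmetric] by (rule cat_assoc[OF C k p(3) g, symmetric])
  finally show "Cmp C g u = Cmp C g v" .
qed

lemma actionD:
  assumes "is_action C H X \<alpha>"
  shows "X \<in> Obj C" and "\<And>h. h \<in> carrier H \<Longrightarrow> \<alpha> h \<in> hom C X X"
  using assms unfolding is_action_def by blast+

lemma quotientD:
  assumes "is_quotient C H X \<alpha> q Q"
  shows "Q \<in> Obj C" and "q \<in> hom C X Q" and "\<And>h. h \<in> carrier H \<Longrightarrow> Cmp C q (\<alpha> h) = q"
  using assms by (simp_all add: is_quotient_def)

lemma quotient_strict_epi:
  assumes C: "is_category C" and act: "is_action C H X \<alpha>" and quot: "is_quotient C H X \<alpha> q Q"
  shows "is_strict_epi C q"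
  unfolding is_strict_epi_def
proof (intro conjI ballI impI)
  note q = quotientD(2)[OF quot] and X = actionD(1)[OF act]
  then show "q \<in> Arr C" by (simp add: hom_iff)
  fix g assume "g \<in> Arr C" and "Dom C g = Dom C q"
    and compat: "\<forall>U \<in> Obj C. \<forall>u \<in> hom C U (Dom C q). \<forall>v \<in> hom C U (Dom C q).
                   Cmp C q u = Cmp C q v \<longrightarrow> Cmp C g u = Cmp C g v"
  then have g: "g \<in> hom C X (Cod C g)" and dom_q: "Dom C q = X"
    using q by (auto simp: hom_iff)
  have "Cmp C g (\<alpha> h) = g" if h: "h \<in> carrier H" for h
  proof -
    have "Cmp C q (\<alpha> h) = Cmp C q (Idt C X)"
      using quotientD(3)[OF quot h] cat_comp_id_right[OF C q] by simp
    then have "Cmp C g (\<alpha> h) = Cmp C g (Idt C X)"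
      using compat X actionD(2)[OF act h] cat_id_hom[OF C X] unfolding dom_q by blast
    then show ?thesis using cat_comp_id_right[OF C g] by simp
  qed
  moreover have "Cod C q = Q"
    using q by (simp add: hom_iff)
  ultimately show "\<exists>!k. k \<in> hom C (Cod C q) (Cod C g) \<and> Cmp C k q = g"
    using quot cat_hom_objs(2)[OF C g] g unfolding is_quotient_def by simp
qed

lemma invariant_arrow_coequalizes_codiagonals:
  assumes C: "is_category C" and cop: "is_coproduct C I (\<lambda>_. X) XH lam"
    and n1: "n1 \<in> hom C XH X" and n2: "n2 \<in> hom C XH X"
    and n1_lam: "\<And>i. i \<in> I \<Longrightarrow> Cmp C n1 (lam i) = Idt C X"
    and n2_lam: "\<And>i. i \<in> I \<Longrightarrow> Cmp C n2 (lam i) = a i"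
    and g: "g \<in> hom C X Z" and g_inv: "\<And>i. i \<in> I \<Longrightarrow> Cmp C g (a i) = g"
  shows "Cmp C g n1 = Cmp C g n2"
proof (rule coproduct_arrow_eqI[OF C cop cat_comp_hom[OF C n1 g] cat_comp_hom[OF C n2 g]])
  fix i assume i: "i \<in> I"
  note lam = coproductD(2)[OF cop i]
  have "Cmp C (Cmp C g n1) (lam i) = g"
    using cat_assoc[OF C lam n1 g] n1_lam[OF i] cat_comp_id_right[OF C g] by simp
  also have "\<dots> = Cmp C (Cmp C g n2) (lam i)"
    using cat_assoc[OF C lam n2 g] n2_lam[OF i] g_inv[OF i] by simp
  finally show "Cmp C (Cmp C g n1) (lam i) = Cmp C (Cmp C g n2) (lam i)" .
qed

text \<open>The data in the definition of effectiveness, with p1 \<circ> e = \<nabla> and p2 \<circ> e = \<nabla>_a.\<close>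

definition kernel_pair_cover ::
  "('o, 'm) category \<Rightarrow> 'i set \<Rightarrow> 'o \<Rightarrow> ('i \<Rightarrow> 'm) \<Rightarrow> 'm
    \<Rightarrow> 'o \<Rightarrow> ('i \<Rightarrow> 'm) \<Rightarrow> 'o \<Rightarrow> 'm \<Rightarrow> 'm \<Rightarrow> 'm \<Rightarrow> bool" where
  "kernel_pair_cover C I X a q XI lam R p1 p2 e \<longleftrightarrow>
     is_coproduct C I (\<lambda>_. X) XI lam \<and> is_pullback C q q R p1 p2 \<and>
     e \<in> hom C XI R \<and> is_strict_epi C e \<and>
     (\<forall>i \<in> I. Cmp C (Cmp C p1 e) (lam i) = Idt C X \<and> Cmp C (Cmp C p2 e) (lam i) = a i)"

lemma effective_action_kernel_pair_cover:
  fixes H :: "('g, 'b) monoid_scheme"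
  assumes C: "is_category C" and lim: "has_finite_limits C"
    and coprod: "has_coproducts TYPE('g) C" and act: "is_action C H X \<alpha>"
    and eff: "is_effective C H X \<alpha>" and quot: "is_quotient C H X \<alpha> q Q"
  shows "\<exists>XH lam R p1 p2 e. kernel_pair_cover C (carrier H) X \<alpha> q XH lam R p1 p2 e"
proof -
  note X = actionD(1)[OF act] and \<alpha> = actionD(2)[OF act]
  note q = quotientD(2)[OF quot] and q_inv = quotientD(3)[OF quot]
  obtain XH lam where cop: "is_coproduct C (carrier H) (\<lambda>_. X) XH lam"
    using coprod[unfolded has_coproducts_def, rule_format, of "carrier H" "\<lambda>_. X"] X
    by blast
  note XH = coproductD(1)[OF cop]
  obtain nabla where nabla: "nabla \<in> hom C XH X"
    and nabla_lam: "\<forall>h \<in> carrier H. Cmp C nabla (lam h) = Idt C X"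
    using coproduct_copairing[OF cop X, of "\<lambda>_. Idt C X"] cat_id_hom[OF C X] by blast
  obtain nabla_H where nabla_H: "nabla_H \<in> hom C XH X"
    and nabla_H_lam: "\<forall>h \<in> carrier H. Cmp C nabla_H (lam h) = \<alpha> h"
    using coproduct_copairing[OF cop X, of \<alpha>] \<alpha> by blast
  have "Cmp C q nabla = Cmp C q nabla_H"
    by (rule invariant_arrow_coequalizes_codiagonals[OF C cop nabla nabla_H
          nabla_lam[rule_format] nabla_H_lam[rule_format] q q_inv])
  moreover have q_arr: "q \<in> Arr C" and dom_q: "Dom C q = X"
    using q by (simp_all add: hom_iff)
  moreover obtain R p1 p2 where pb: "is_pullback C q q R p1 p2"
    using lim q_arr unfolding has_finite_limits_def by blast
  ultimately obtain e where e: "e \<in> hom C XH R"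
    and p1_e: "Cmp C p1 e = nabla" and p2_e: "Cmp C p2 e = nabla_H"
    using pullback_pairing[OF pb XH] nabla nabla_H by metis
  have "is_strict_epi C e"
    using eff[unfolded is_effective_def, THEN conjunct2, rule_format,
        OF quot cop nabla nabla_lam[rule_format] nabla_H nabla_H_lam[rule_format] pb e p1_e p2_e] .
  with cop pb e nabla_lam nabla_H_lam p1_e p2_e show ?thesis
    unfolding kernel_pair_cover_def by blast
qed

lemma functor_preserves_kernel_pair_cover:
  fixes I :: "'i set"
  assumes C: "is_category C" and F: "is_functor C E Fo Fm"
    and F_lim: "preserves_finite_limits C E Fo Fm" and F_epi: "preserves_strict_epis C E Fo Fm"
    and F_coprod: "preserves_coproducts TYPE('i) C E Fo Fm"
    and q: "q \<in> hom C X Q" and cover: "kernel_pair_cover C I X a q XI lam R p1 p2 e"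
  shows "kernel_pair_cover E I (Fo X) (Fm \<circ> a) (Fm q)
           (Fo XI) (Fm \<circ> lam) (Fo R) (Fm p1) (Fm p2) (Fm e)"
proof -
  have cop: "is_coproduct C I (\<lambda>_. X) XI lam" and pb: "is_pullback C q q R p1 p2"
    and e: "e \<in> hom C XI R" and e_epi: "is_strict_epi C e"
    and p1_e: "\<And>i. i \<in> I \<Longrightarrow> Cmp C (Cmp C p1 e) (lam i) = Idt C X"
    and p2_e: "\<And>i. i \<in> I \<Longrightarrow> Cmp C (Cmp C p2 e) (lam i) = a i"
    using cover unfolding kernel_pair_cover_def by blast+
  note p = pullback_homs[OF pb q]
  have "is_coproduct E I (Fo \<circ> (\<lambda>_. X)) (Fo XI) (Fm \<circ> lam)"
    using F_coprod cop unfolding preserves_coproducts_def by blast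
  then have "is_coproduct E I (\<lambda>_. Fo X) (Fo XI) (Fm \<circ> lam)"
    by (simp add: comp_def)
  moreover have "is_pullback E (Fm q) (Fm q) (Fo R) (Fm p1) (Fm p2)"
    using F_lim pb unfolding preserves_finite_limits_def by blast
  moreover have "is_strict_epi E (Fm e)"
    using F_epi e_epi unfolding preserves_strict_epis_def by blast
  moreover have "Cmp E (Cmp E (Fm p) (Fm e)) (Fm (lam i)) = Fm (Cmp C (Cmp C p e) (lam i))"
    if "p \<in> hom C R X" and "i \<in> I" for p i
    using functor_comp[OF F e that(1)]
      functor_comp[OF F coproductD(2)[OF cop that(2)] cat_comp_hom[OF C e that(1)]]
    by simp
  ultimately show ?thesis
    unfolding kernel_pair_cover_def
    using functor_hom[OF F e] p p1_e p2_e functor_id[OF F cat_hom_objs(1)[OF C q]] by simp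
qed

lemma kernel_pair_cover_quotient:
  assumes E: "is_category E" and q_epi: "is_strict_epi E q" and q: "q \<in> hom E X Q"
    and q_inv: "\<forall>h \<in> carrier H. Cmp E q (a h) = q"
    and cover: "kernel_pair_cover E (carrier H) X a q XH lam R p1 p2 e"
  shows "is_quotient E H X a q Q"
  unfolding is_quotient_def
proof (intro conjI ballI impI)
  show "Q \<in> Obj E" using cat_hom_objs(2)[OF E q] .
  show "q \<in> hom E X Q" using q .
  show "Cmp E q (a h) = q" if "h \<in> carrier H" for h using q_inv that by blast
  fix Z g assume g: "g \<in> hom E X Z" and g_inv: "\<forall>h \<in> carrier H. Cmp E g (a h) = g"
  have cop: "is_coproduct E (carrier H) (\<lambda>_. X) XH lam" and pb: "is_pullback E q q R p1 p2"
    and e: "e \<in> hom E XH R" and e_epi: "is_strict_epi E e"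
    and p1_e: "\<And>h. h \<in> carrier H \<Longrightarrow> Cmp E (Cmp E p1 e) (lam h) = Idt E X"
    and p2_e: "\<And>h. h \<in> carrier H \<Longrightarrow> Cmp E (Cmp E p2 e) (lam h) = a h"
    using cover unfolding kernel_pair_cover_def by blast+
  note p = pullback_homs[OF pb q]
  have "Cmp E g (Cmp E p1 e) = Cmp E g (Cmp E p2 e)"
    using invariant_arrow_coequalizes_codiagonals[OF E cop cat_comp_hom[OF E e p(2)]
        cat_comp_hom[OF E e p(3)] p1_e p2_e g] g_inv by blast
  then have "Cmp E (Cmp E g p1) e = Cmp E (Cmp E g p2) e"
    using cat_assoc[OF E e p(2) g] cat_assoc[OF E e p(3) g] by simp
  then have "Cmp E g p1 = Cmp E g p2"
    by (rule strict_epi_cancel[OF E e_epi e cat_comp_hom[OF E p(2) g]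
          cat_comp_hom[OF E p(3) g]])
  then show "\<exists>!k. k \<in> hom E Q Z \<and> Cmp E k q = g"
    by (rule strict_epi_factor_kernel_pair[OF E q_epi q pb g])
qed

theorem proposition5p19:
  fixes C :: "('o, 'm) category" and E :: "('p, 'n) category"
    and Fo :: "'o \<Rightarrow> 'p" and Fm :: "'m \<Rightarrow> 'n"
  assumes "is_category C" and "is_category E"
    and "has_finite_limits C" and "has_finite_limits E"
    and "has_coproducts TYPE('g) C" and "has_coproducts TYPE('g) E"
    and "actions_effective TYPE(('g, 'b) monoid_scheme) C"
    and "actions_effective TYPE(('g, 'b) monoid_scheme) E"
    and "is_functor C E Fo Fm"
    and "preserves_finite_limits C E Fo Fm"
    and "preserves_strict_epis C E Fo Fm"
    and "preserves_coproducts TYPE('g) C E Fo Fm"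
  shows "\<forall>(H :: ('g, 'b) monoid_scheme) X \<alpha> q Q.
           group H \<longrightarrow> is_action C H X \<alpha> \<longrightarrow> is_quotient C H X \<alpha> q Q \<longrightarrow>
           is_quotient E H (Fo X) (Fm \<circ> \<alpha>) (Fm q) (Fo Q)"
proof (intro allI impI)
  note C = assms(1) and E = assms(2) and F = assms(9)
  fix H :: "('g, 'b) monoid_scheme" and X \<alpha> q Q
  assume "group H" and act: "is_action C H X \<alpha>" and quot: "is_quotient C H X \<alpha> q Q"
  then have "is_effective C H X \<alpha>"
    using assms(7) unfolding actions_effective_def by blast
  then obtain XH lam R p1 p2 e
    where cover: "kernel_pair_cover C (carrier H) X \<alpha> q XH lam R p1 p2 e"
    using effective_action_kernel_pair_cover[OF C assms(3,5) act _ quot] by blast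
  note q = quotientD(2)[OF quot]
  show "is_quotient E H (Fo X) (Fm \<circ> \<alpha>) (Fm q) (Fo Q)"
  proof (rule kernel_pair_cover_quotient[OF E _ _ _
        functor_preserves_kernel_pair_cover[OF C F assms(10-12) q cover]])
    show "is_strict_epi E (Fm q)"
      using assms(11) quotient_strict_epi[OF C act quot] unfolding preserves_strict_epis_def by blast
    show "Fm q \<in> hom E (Fo X) (Fo Q)"
      using functor_hom[OF F q] .
    show "\<forall>h \<in> carrier H. Cmp E (Fm q) ((Fm \<circ> \<alpha>) h) = Fm q"
      using functor_comp[OF F actionD(2)[OF act] q] quotientD(3)[OF quot] by simp
  qed
qed

end
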